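(* Let $f:\mathbb{R}^m\to\mathbb{R}$ be $C^2$, let $\delta_0,\dots,\delta_m$ be distinct reals, $\tau>0$, $0<\gamma_0<1$, and let $\mathcal{B}\subset\mathbb{R}^m$ be a compact set with $\inf_{x\in\mathcal{B}}\|\nabla f(x)\|>0$. Then: (1) there exists $T>0$ such that $\sup_{x\in\mathcal{B}}\mathrm{sp}(A(x))\le T$ and $\inf_{x\in\mathcal{B}}\mathrm{minsp}(A(x))\ge 1/T$; (2) $\inf_{x\in\mathcal{B}}\gamma(x)>0$.
   Context: For a real symmetric matrix $A$, $\mathrm{sp}(A)$ (resp. $\mathrm{minsp}(A)$) is the maximum (resp. minimum) of $|\lambda|$ over eigenvalues $\lambda$ of $A$. For invertible real symmetric $A$, $pr_{A,\pm}$ is the orthogonal projection onto the span of eigenvectors of $A$ with positive/negative eigenvalues. Let $\kappa:=\frac12\min_{i\ne j}|\delta_i-\delta_j|$. For $x$ with $\nabla f(x)\ne0$: $\delta(x):=\delta_j$ where $j$ is the smallest index in $\{0,\dots,m\}$ with $\mathrm{minsp}(\nabla^2f(x)+\delta_j\|\nabla f(x)\|^{\tau}I)\ge\kappa\|\nabla f(x)\|^{\tau}$; $A(x):=\nabla^2 f(x)+\delta(x)\|\nabla f(x)\|^{\tau}I$; $v(x):=A(x)^{-1}\nabla f(x)$; $w(x):=pr_{A(x),+}v(x)-pr_{A(x),-}v(x)$; and $\gamma(x)$ is the largest element $\gamma$ of $\{\gamma_0,\gamma_0/3,\gamma_0/3^2,\dots\}$ such that $f(x-\gamma w(x))-f(x)\le-\gamma\langle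 w(x),\nabla f(x)\rangle/3$. *)

theory Defs
  imports "HOL-Analysis.Analysis"
begin

definition eigenvalues :: "real^'n^'n \<Rightarrow> real set" where
  "eigenvalues A = {l. \<exists>v. v \<noteq> 0 \<and> A *v v = l *s v}"

definition sp :: "real^'n^'n \<Rightarrow> real" where
  "sp A = Max (abs ` eigenvalues A)"

definition minsp :: "real^'n^'n \<Rightarrow> real" where
  "minsp A = Min (abs ` eigenvalues A)"

definition orth_proj :: "(real^'n) set \<Rightarrow> real^'n \<Rightarrow> real^'n" where
  "orth_proj S v = (THE p. p \<in> S \<and> (\<forall>s\<in>S. (v - p) \<bullet> s = 0))"

definition pr_pos :: "real^'n^'n \<Rightarrow> real^'n \<Rightarrow> real^'n" where
  "pr_pos A = orth_proj (span {v. \<exists>l>0. A *v v = l *s v})"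

definition pr_neg :: "real^'n^'n \<Rightarrow> real^'n \<Rightarrow> real^'n" where
  "pr_neg A = orth_proj (span {v. \<exists>l<0. A *v v = l *s v})"

definition kappa :: "nat \<Rightarrow> (nat \<Rightarrow> real) \<Rightarrow> real" where
  "kappa m d = Min {\<bar>d i - d j\<bar> | i j. i \<le> m \<and> j \<le> m \<and> i \<noteq> j} / 2"

(* H = Hessian, g = gradient of f *)
definition delta_idx :: "(real^'n \<Rightarrow> real^'n^'n) \<Rightarrow> (real^'n \<Rightarrow> real^'n) \<Rightarrow> (nat \<Rightarrow> real) \<Rightarrow> real
    \<Rightarrow> real^'n \<Rightarrow> nat" where
  "delta_idx H g d tau x = (LEAST j. j \<le> CARD('n) \<and>
      minsp (H x + mat (d j * norm (g x) powr tau)) \<ge> kappa CARD('n) d * norm (g x) powr tau)"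

definition Amat :: "(real^'n \<Rightarrow> real^'n^'n) \<Rightarrow> (real^'n \<Rightarrow> real^'n) \<Rightarrow> (nat \<Rightarrow> real) \<Rightarrow> real
    \<Rightarrow> real^'n \<Rightarrow> real^'n^'n" where
  "Amat H g d tau x = H x + mat (d (delta_idx H g d tau x) * norm (g x) powr tau)"

definition vdir :: "(real^'n \<Rightarrow> real^'n^'n) \<Rightarrow> (real^'n \<Rightarrow> real^'n) \<Rightarrow> (nat \<Rightarrow> real) \<Rightarrow> real
    \<Rightarrow> real^'n \<Rightarrow> real^'n" where
  "vdir H g d tau x = matrix_inv (Amat H g d tau x) *v g x"

definition wdir :: "(real^'n \<Rightarrow> real^'n^'n) \<Rightarrow> (real^'n \<Rightarrow> real^'n) \<Rightarrow> (nat \<Rightarrow> real) \<Rightarrow> real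
    \<Rightarrow> real^'n \<Rightarrow> real^'n" where
  "wdir H g d tau x = pr_pos (Amat H g d tau x) (vdir H g d tau x)
                    - pr_neg (Amat H g d tau x) (vdir H g d tau x)"

definition armijo :: "(real^'n \<Rightarrow> real) \<Rightarrow> (real^'n \<Rightarrow> real^'n^'n) \<Rightarrow> (real^'n \<Rightarrow> real^'n)
    \<Rightarrow> (nat \<Rightarrow> real) \<Rightarrow> real \<Rightarrow> real \<Rightarrow> real^'n \<Rightarrow> nat \<Rightarrow> bool" where
  "armijo f H g d tau gamma0 x k =
     (let gm = gamma0 / 3 ^ k; w = wdir H g d tau x in
      f (x - gm *\<^sub>R w) - f x \<le> - gm * (w \<bullet> g x) / 3)"

definition gamma_step :: "(real^'n \<Rightarrow> real) \<Rightarrow> (real^'n \<Rightarrow> real^'n^'n) \<Rightarrow> (real^'n \<Rightarrow> real^'n)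
    \<Rightarrow> (nat \<Rightarrow> real) \<Rightarrow> real \<Rightarrow> real \<Rightarrow> real^'n \<Rightarrow> real" where
  "gamma_step f H g d tau gamma0 x = gamma0 / 3 ^ (LEAST k. armijo f H g d tau gamma0 x k)"

end

theory Submission
  imports Defs
begin

text \<open>Schwarz's theorem makes the Hessian, hence every \<open>A(x)\<close>, self-adjoint, so \<open>\<real>\<^sup>m\<close> splits
  orthogonally into the spans of eigenvectors with positive and with negative eigenvalue.
  The \<open>m + 1\<close> shifts \<open>\<delta>\<^sub>j \<parallel>\<nabla>f(x)\<parallel>\<^sup>\<tau>\<close> are \<open>2\<kappa>\<parallel>\<nabla>f(x)\<parallel>\<^sup>\<tau>\<close> apart and the Hessian has at most \<open>m\<close>
  eigenvalues, so by pigeonhole some shift keeps every eigenvalue at distance \<open>\<kappa>\<parallel>\<nabla>f(x)\<parallel>\<^sup>\<tau>\<close>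
  from \<open>0\<close>; on a compact set where \<open>\<parallel>\<nabla>f\<parallel>\<close> is bounded away from \<open>0\<close> this gives uniform
  two-sided spectral bounds.
  The direction \<open>w(x)\<close> is \<open>|A(x)|\<^sup>-\<^sup>1\<nabla>f(x)\<close>, so \<open>\<langle>w, \<nabla>f\<rangle> \<ge> \<mu>\<parallel>w\<parallel>\<^sup>2\<close> with \<open>\<mu>\<close> the lower spectral
  bound, and \<open>\<parallel>w\<parallel>\<close> is bounded; as \<open>\<nabla>f\<close> is Lipschitz on a ball containing all backtracking
  segments, the mean value theorem shows that one fixed step \<open>\<gamma>\<^sub>0/3\<^sup>k\<close> satisfies the Armijo
  condition at every point.\<close>

section \<open>Self-adjoint operators\<close>

definition self_adjoint :: "('a::real_inner \<Rightarrow> 'a) \<Rightarrow> bool" where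
  "self_adjoint F \<longleftrightarrow> linear F \<and> (\<forall>x y. F x \<bullet> y = x \<bullet> F y)"

definition op_eigenvalues :: "('a::real_vector \<Rightarrow> 'a) \<Rightarrow> real set" where
  "op_eigenvalues F = {l. \<exists>v. v \<noteq> 0 \<and> F v = l *\<^sub>R v}"

definition pos_eigenvectors :: "('a::real_vector \<Rightarrow> 'a) \<Rightarrow> 'a set" where
  "pos_eigenvectors F = {v. \<exists>l>0. F v = l *\<^sub>R v}"

definition neg_eigenvectors :: "('a::real_vector \<Rightarrow> 'a) \<Rightarrow> 'a set" where
  "neg_eigenvectors F = {v. \<exists>l<0. F v = l *\<^sub>R v}"

lemma self_adjoint_linear: "self_adjoint F \<Longrightarrow> linear F"
  by (simp add: self_adjoint_def)

lemma self_adjoint_inner: "self_adjoint F \<Longrightarrow> F x \<bullet> y = x \<bullet> F y"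
  by (simp add: self_adjoint_def)

lemma self_adjoint_uminus: "self_adjoint F \<Longrightarrow> self_adjoint (\<lambda>x. - F x)"
  by (auto simp: self_adjoint_def linear_compose_neg)

lemma self_adjoint_eigenvectors_orthogonal:
  assumes "self_adjoint F" "F x = l *\<^sub>R x" "F y = m *\<^sub>R y" "l \<noteq> m"
  shows "x \<bullet> y = 0"
proof -
  have "l * (x \<bullet> y) = m * (x \<bullet> y)"
    using self_adjoint_inner[OF assms(1), of x y] assms(2,3) by simp
  thus ?thesis using assms(4) by simp
qed

lemma self_adjoint_op_eigenvalues_finite:
  fixes F :: "'a::euclidean_space \<Rightarrow> 'a"
  assumes F: "self_adjoint F"
  shows "finite (op_eigenvalues F)" and "card (op_eigenvalues F) \<le> DIM('a)"
proof -
  define e where "e l = (SOME v. v \<noteq> 0 \<and> F v = l *\<^sub>R v)" for l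
  have e: "e l \<noteq> 0 \<and> F (e l) = l *\<^sub>R e l" if "l \<in> op_eigenvalues F" for l
    using someI_ex[of "\<lambda>v. v \<noteq> 0 \<and> F v = l *\<^sub>R v"] that
    unfolding e_def op_eigenvalues_def by blast
  have inj: "inj_on e (op_eigenvalues F)"
  proof (rule inj_onI)
    fix l m assume lm: "l \<in> op_eigenvalues F" "m \<in> op_eigenvalues F" "e l = e m"
    hence "l *\<^sub>R e l = m *\<^sub>R e l" using e[of l] e[of m] by metis
    thus "l = m" using e[OF lm(1)] by simp
  qed
  have "pairwise orthogonal (e ` op_eigenvalues F)"
    unfolding pairwise_def orthogonal_def
  proof clarify
    fix l m assume "l \<in> op_eigenvalues F" "m \<in> op_eigenvalues F" "e l \<noteq> e m"
    thus "e l \<bullet> e m = 0" using e self_adjoint_eigenvectors_orthogonal[OF F] by metis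
  qed
  moreover have "0 \<notin> e ` op_eigenvalues F" using e by auto
  ultimately have "independent (e ` op_eigenvalues F)" by (rule pairwise_orthogonal_independent)
  hence "finite (e ` op_eigenvalues F)" "card (e ` op_eigenvalues F) \<le> DIM('a)"
    using independent_bound by auto
  thus "finite (op_eigenvalues F)" "card (op_eigenvalues F) \<le> DIM('a)"
    using finite_imageD[OF _ inj] card_image[OF inj] by auto
qed

lemma nonneg_quadratic_linear_coeff_zero:
  fixes a b :: real
  assumes "\<And>t. 0 \<le> a * t + b * t\<^sup>2"
  shows "a = 0"
proof (rule ccontr)
  assume "a \<noteq> 0"
  define c where "c = \<bar>b\<bar> + 1"
  have c: "c > 0" "b - c < 0" unfolding c_def by linarith+
  have "a * (- a / c) + b * (- a / c)\<^sup>2 = a\<^sup>2 / c\<^sup>2 * (b - c)"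
    using c by (simp add: field_simps power2_eq_square)
  also have "\<dots> < 0" using \<open>a \<noteq> 0\<close> c by (intro mult_pos_neg) auto
  finally show False using assms[of "- a / c"] by linarith
qed

text \<open>The quadratic form of \<open>F - \<lambda>\<close> is nonnegative on \<open>S\<close> and vanishes at \<open>x0\<close>, so its
  linear term at \<open>x0\<close> vanishes in every direction of \<open>S\<close>.\<close>

lemma self_adjoint_rayleigh_minimizer_eigenvector:
  assumes F: "self_adjoint F" and S: "subspace S" and inv: "\<And>x. x \<in> S \<Longrightarrow> F x \<in> S"
    and x0: "x0 \<in> S" "x0 \<bullet> x0 = 1"
    and min: "\<And>y. y \<in> S \<Longrightarrow> (x0 \<bullet> F x0) * (y \<bullet> y) \<le> y \<bullet> F y"
  shows "F x0 = (x0 \<bullet> F x0) *\<^sub>R x0"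
proof -
  define lam where "lam = x0 \<bullet> F x0"
  define G where "G y = F y - lam *\<^sub>R y" for y
  have linF: "linear F" using F by (rule self_adjoint_linear)
  have G_lin: "G (y + t *\<^sub>R z) = G y + t *\<^sub>R G z" for y z t
    unfolding G_def by (simp add: linear_add[OF linF] linear_scale[OF linF] algebra_simps)
  have G_adj: "y \<bullet> G z = z \<bullet> G y" for y z
    unfolding G_def using self_adjoint_inner[OF F, of z y]
    by (simp add: inner_diff_right inner_commute)
  have G_nonneg: "0 \<le> y \<bullet> G y" if "y \<in> S" for y
    using min[OF that] by (simp add: G_def lam_def inner_diff_right)
  have G_x0: "x0 \<bullet> G x0 = 0" using x0(2) by (simp add: G_def lam_def inner_diff_right)
  have "G x0 \<in> S" unfolding G_def using x0(1) inv S by (simp add: subspace_diff subspace_scale)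
  have orth: "z \<bullet> G x0 = 0" if z: "z \<in> S" for z
  proof -
    have "2 * (z \<bullet> G x0) = 0"
    proof (rule nonneg_quadratic_linear_coeff_zero)
      fix t :: real
      have "x0 + t *\<^sub>R z \<in> S" using x0(1) z S by (simp add: subspace_add subspace_scale)
      hence "0 \<le> (x0 + t *\<^sub>R z) \<bullet> G (x0 + t *\<^sub>R z)" by (rule G_nonneg)
      also have "\<dots> = 2 * (z \<bullet> G x0) * t + (z \<bullet> G z) * t\<^sup>2"
        unfolding G_lin using G_x0 G_adj[of x0 z]
        by (simp add: algebra_simps power2_eq_square)
      finally show "0 \<le> 2 * (z \<bullet> G x0) * t + (z \<bullet> G z) * t\<^sup>2" .
    qed
    thus ?thesis by simp
  qed
  have "G x0 = 0" using orth[OF \<open>G x0 \<in> S\<close>] by simp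
  thus ?thesis by (simp add: G_def lam_def)
qed

lemma self_adjoint_invariant_subspace_eigenvector:
  fixes F :: "'a::euclidean_space \<Rightarrow> 'a"
  assumes F: "self_adjoint F" and S: "subspace S" and inv: "\<And>x. x \<in> S \<Longrightarrow> F x \<in> S"
    and y0: "y0 \<in> S" "y0 \<noteq> 0"
  shows "\<exists>x0\<in>S. norm x0 = 1 \<and> F x0 = (x0 \<bullet> F x0) *\<^sub>R x0
           \<and> (\<forall>y\<in>S. (x0 \<bullet> F x0) * (y \<bullet> y) \<le> y \<bullet> F y)"
proof -
  have linF: "linear F" using F by (rule self_adjoint_linear)
  define K where "K = sphere 0 1 \<inter> S"
  have "compact K" unfolding K_def by (intro compact_Int_closed compact_sphere closed_subspace S)
  moreover have "(1 / norm y0) *\<^sub>R y0 \<in> K" using y0 S unfolding K_def by (simp add: subspace_scale)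
  moreover have "continuous_on K (\<lambda>y. y \<bullet> F y)"
    using linear_continuous_on[OF linear_conv_bounded_linear[THEN iffD1, OF linF]]
    by (intro continuous_intros)
  ultimately obtain x0 where x0: "x0 \<in> K" "\<And>y. y \<in> K \<Longrightarrow> x0 \<bullet> F x0 \<le> y \<bullet> F y"
    using continuous_attains_inf[of K "\<lambda>y. y \<bullet> F y"] by blast
  have x0S: "x0 \<in> S" and nx0: "norm x0 = 1" using x0(1) by (auto simp: K_def)
  have min: "(x0 \<bullet> F x0) * (y \<bullet> y) \<le> y \<bullet> F y" if y: "y \<in> S" for y
  proof (cases "y = 0")
    case True thus ?thesis using linear_0[OF linF] by simp
  next
    case False
    define y' where "y' = (1 / norm y) *\<^sub>R y"
    have "y' \<in> K" using False y S unfolding K_def y'_def by (simp add: subspace_scale)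
    hence "x0 \<bullet> F x0 \<le> y' \<bullet> F y'" by (rule x0(2))
    also have "y' \<bullet> F y' = (y \<bullet> F y) / (norm y)\<^sup>2"
      unfolding y'_def by (simp add: linear_scale[OF linF] power2_eq_square)
    finally have "x0 \<bullet> F x0 \<le> (y \<bullet> F y) / (norm y)\<^sup>2" .
    thus ?thesis using False by (simp add: field_simps power2_norm_eq_inner)
  qed
  have "x0 \<bullet> x0 = 1" using nx0 by (simp add: norm_eq_1)
  from self_adjoint_rayleigh_minimizer_eigenvector[OF F S inv x0S this min]
  show ?thesis using x0S nx0 min by blast
qed

lemma span_eigenvectors_invariant:
  assumes F: "linear F" and E: "\<And>e. e \<in> E \<Longrightarrow> \<exists>l. F e = l *\<^sub>R e" and x: "x \<in> span E"
  shows "F x \<in> span E"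
proof -
  have "E \<subseteq> F -` span E" using E by (force simp: span_base span_scale)
  hence "span E \<subseteq> F -` span E"
    by (intro span_minimal linear_subspace_vimage F subspace_span)
  thus ?thesis using x by auto
qed

lemma span_pos_eigenvectors_invariant:
  "linear F \<Longrightarrow> x \<in> span (pos_eigenvectors F) \<Longrightarrow> F x \<in> span (pos_eigenvectors F)"
  by (rule span_eigenvectors_invariant) (auto simp: pos_eigenvectors_def)

lemma span_neg_eigenvectors_invariant:
  "linear F \<Longrightarrow> x \<in> span (neg_eigenvectors F) \<Longrightarrow> F x \<in> span (neg_eigenvectors F)"
  by (rule span_eigenvectors_invariant) (auto simp: neg_eigenvectors_def)

lemma inner_span_eq_0:
  assumes "\<And>a b. a \<in> S \<Longrightarrow> b \<in> T \<Longrightarrow> a \<bullet> b = 0" and "x \<in> span S" and "y \<in> span T"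
  shows "x \<bullet> y = 0"
proof -
  have "orthogonal s y" if "s \<in> S" for s
    by (rule orthogonal_to_span[OF assms(3)]) (use assms(1) that in \<open>auto simp: orthogonal_def\<close>)
  hence "orthogonal y x"
    by (intro orthogonal_to_span[OF assms(2)]) (auto simp: orthogonal_def inner_commute)
  thus ?thesis by (simp add: orthogonal_def inner_commute)
qed

lemma self_adjoint_pos_neg_eigenvectors_orthogonal:
  assumes "self_adjoint F" "a \<in> span (pos_eigenvectors F)" "b \<in> span (neg_eigenvectors F)"
  shows "a \<bullet> b = 0"
  using assms(2,3)
  by (rule inner_span_eq_0[rotated])
    (auto simp: pos_eigenvectors_def neg_eigenvectors_def
          intro: self_adjoint_eigenvectors_orthogonal[OF assms(1)])

text \<open>The orthogonal complement of all eigenvectors is invariant, so it would contain an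
  eigenvector if it were nonzero.\<close>

lemma self_adjoint_span_pos_neg_eigenvectors:
  fixes F :: "'a::euclidean_space \<Rightarrow> 'a"
  assumes F: "self_adjoint F" and ker: "\<And>v. F v = 0 \<Longrightarrow> v = 0"
  obtains a b where "a \<in> span (pos_eigenvectors F)" "b \<in> span (neg_eigenvectors F)" "v = a + b"
proof -
  have linF: "linear F" using F by (rule self_adjoint_linear)
  define U where "U = pos_eigenvectors F \<union> neg_eigenvectors F"
  obtain y z where y: "y \<in> span U" and z: "\<And>w. w \<in> span U \<Longrightarrow> orthogonal z w" and v: "v = y + z"
    using orthogonal_subspace_decomp_exists[of U v] by blast
  define W where "W = {x. \<forall>u\<in>span U. x \<bullet> u = 0}"
  have W: "subspace W" unfolding W_def subspace_def by (auto simp: inner_add_left)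
  have W_inv: "F x \<in> W" if "x \<in> W" for x
  proof -
    have "F u \<in> span U" if "u \<in> span U" for u
      by (rule span_eigenvectors_invariant[OF linF _ that])
        (auto simp: U_def pos_eigenvectors_def neg_eigenvectors_def)
    thus ?thesis using self_adjoint_inner[OF F] \<open>x \<in> W\<close> by (simp add: W_def)
  qed
  have "z \<in> W" using z by (simp add: W_def orthogonal_def)
  have "z = 0"
  proof (rule ccontr)
    assume "z \<noteq> 0"
    then obtain x0 where x0: "x0 \<in> W" "norm x0 = 1" "F x0 = (x0 \<bullet> F x0) *\<^sub>R x0"
      using self_adjoint_invariant_subspace_eigenvector[OF F W W_inv \<open>z \<in> W\<close>] by blast
    have "x0 \<bullet> F x0 \<noteq> 0" using x0 ker by (metis norm_zero scaleR_zero_left zero_neq_one)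
    hence "0 < x0 \<bullet> F x0 \<or> x0 \<bullet> F x0 < 0" by linarith
    hence "x0 \<in> U" using x0(3) unfolding U_def pos_eigenvectors_def neg_eigenvectors_def by blast
    hence "x0 \<bullet> x0 = 0" using x0(1) by (auto simp: W_def span_base)
    thus False using x0(2) by simp
  qed
  hence "v \<in> span U" using v y by simp
  then obtain a b where "a \<in> span (pos_eigenvectors F)" "b \<in> span (neg_eigenvectors F)" "v = a + b"
    unfolding U_def span_Un by blast
  thus ?thesis by (rule that)
qed

lemma uminus_eq_scaleR_iff: "- x = l *\<^sub>R x' \<longleftrightarrow> x = (- l) *\<^sub>R (x' :: 'a::real_vector)"
  by (metis minus_minus scaleR_minus_left)

lemma pos_eigenvectors_uminus: "pos_eigenvectors (\<lambda>x. - F x) = neg_eigenvectors F"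
proof -
  have "(\<exists>l>0. F v = (- l) *\<^sub>R v) \<longleftrightarrow> (\<exists>l<0. F v = l *\<^sub>R v)" for v
    by (metis neg_0_less_iff_less minus_minus)
  thus ?thesis unfolding pos_eigenvectors_def neg_eigenvectors_def uminus_eq_scaleR_iff by blast
qed

lemma op_eigenvalues_uminus: "l \<in> op_eigenvalues (\<lambda>x. - F x) \<longleftrightarrow> - l \<in> op_eigenvalues F"
  unfolding op_eigenvalues_def uminus_eq_scaleR_iff by simp

lemma self_adjoint_pos_eigenvectors_coercive:
  fixes F :: "'a::euclidean_space \<Rightarrow> 'a"
  assumes F: "self_adjoint F" and mu: "\<And>l. l \<in> op_eigenvalues F \<Longrightarrow> mu \<le> \<bar>l\<bar>"
    and a: "a \<in> span (pos_eigenvectors F)"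
  shows "mu * (a \<bullet> a) \<le> a \<bullet> F a"
proof (cases "a = 0")
  case True thus ?thesis using linear_0[OF self_adjoint_linear[OF F]] by simp
next
  case False
  obtain x0 where x0: "x0 \<in> span (pos_eigenvectors F)" "norm x0 = 1" "F x0 = (x0 \<bullet> F x0) *\<^sub>R x0"
    "\<forall>y\<in>span (pos_eigenvectors F). (x0 \<bullet> F x0) * (y \<bullet> y) \<le> y \<bullet> F y"
    using self_adjoint_invariant_subspace_eigenvector[OF F subspace_span
        span_pos_eigenvectors_invariant[OF self_adjoint_linear[OF F]] a False] by blast
  define lam where "lam = x0 \<bullet> F x0"
  have "x0 \<noteq> 0" using x0(2) by auto
  hence "mu \<le> \<bar>lam\<bar>" using x0(3) mu unfolding op_eigenvalues_def lam_def by blast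
  moreover have "\<not> lam < 0"
  proof
    assume "lam < 0"
    hence "x0 \<in> neg_eigenvectors F" using x0(3) unfolding neg_eigenvectors_def lam_def by blast
    hence "x0 \<bullet> x0 = 0"
      using self_adjoint_pos_neg_eigenvectors_orthogonal[OF F x0(1) span_base] by blast
    thus False using \<open>x0 \<noteq> 0\<close> by simp
  qed
  ultimately have "mu * (a \<bullet> a) \<le> lam * (a \<bullet> a)" by (intro mult_right_mono) auto
  also have "\<dots> \<le> a \<bullet> F a" using x0(4) a unfolding lam_def by blast
  finally show ?thesis .
qed

lemma self_adjoint_neg_eigenvectors_coercive:
  fixes F :: "'a::euclidean_space \<Rightarrow> 'a"
  assumes F: "self_adjoint F" and mu: "\<And>l. l \<in> op_eigenvalues F \<Longrightarrow> mu \<le> \<bar>l\<bar>"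
    and b: "b \<in> span (neg_eigenvectors F)"
  shows "mu * (b \<bullet> b) \<le> - (b \<bullet> F b)"
proof -
  have "mu \<le> \<bar>l\<bar>" if "l \<in> op_eigenvalues (\<lambda>x. - F x)" for l
    using mu[of "- l"] that by (simp add: op_eigenvalues_uminus)
  from self_adjoint_pos_eigenvectors_coercive[OF self_adjoint_uminus[OF F] this]
  show ?thesis using b by (simp add: pos_eigenvectors_uminus)
qed

text \<open>With \<open>v = a + b\<close> split into positive and negative spectral parts, \<open>a - b\<close> is \<open>|F|\<^sup>-\<^sup>1 F v\<close>.\<close>

lemma self_adjoint_reflected_direction:
  fixes F :: "'a::euclidean_space \<Rightarrow> 'a"
  assumes F: "self_adjoint F" and mu: "\<And>l. l \<in> op_eigenvalues F \<Longrightarrow> mu \<le> \<bar>l\<bar>"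
    and a: "a \<in> span (pos_eigenvectors F)" and b: "b \<in> span (neg_eigenvectors F)"
  shows "mu * ((a - b) \<bullet> (a - b)) \<le> (a - b) \<bullet> F (a + b)"
proof -
  have linF: "linear F" using F by (rule self_adjoint_linear)
  have orth: "a \<bullet> b = 0" "a \<bullet> F b = 0" "F a \<bullet> b = 0"
    using self_adjoint_pos_neg_eigenvectors_orthogonal[OF F] a b
      span_pos_eigenvectors_invariant[OF linF a] span_neg_eigenvectors_invariant[OF linF b]
    by blast+
  have "(a - b) \<bullet> F (a + b) = a \<bullet> F a + a \<bullet> F b - b \<bullet> F a - b \<bullet> F b"
    by (simp add: linear_add[OF linF] inner_add_right inner_diff_left)
  also have "\<dots> = a \<bullet> F a - b \<bullet> F b" using orth by (simp add: inner_commute)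
  finally have "(a - b) \<bullet> F (a + b) = a \<bullet> F a - b \<bullet> F b" .
  moreover have "(a - b) \<bullet> (a - b) = a \<bullet> a + b \<bullet> b"
    using orth by (simp add: inner_diff_left inner_diff_right inner_commute)
  ultimately show ?thesis
    using self_adjoint_pos_eigenvectors_coercive[OF F mu a]
      self_adjoint_neg_eigenvectors_coercive[OF F mu b]
    by (simp add: algebra_simps)
qed

section \<open>Symmetric matrices\<close>

lemma matrix_vector_mult_mat: "(mat c :: real^'n^'n) *v x = c *\<^sub>R x"
  by (simp add: vec_eq_iff matrix_vector_mult_def mat_def if_distrib[of "\<lambda>a. a * _"] cong: if_cong)

lemma matrix_vector_mult_add_mat: "((M::real^'n^'n) + mat c) *v x = M *v x + c *\<^sub>R x"
  by (simp add: matrix_vector_mult_add_rdistrib matrix_vector_mult_mat)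

lemma norm_matrix_vector_mult_le: "norm ((A::real^'n^'m) *v x) \<le> norm A * norm x"
proof -
  have "norm (A *v x) \<le> norm (norm x *\<^sub>R (\<chi> i. norm (A $ i)))"
    by (rule norm_le_componentwise_cart)
      (simp add: matrix_vector_mul_component Cauchy_Schwarz_ineq2 mult.commute[of "norm x"])
  also have "\<dots> = norm A * norm x"
    by (simp add: norm_vec_def[of "\<chi> i. norm (A $ i)"] norm_vec_def[of A])
  finally show ?thesis .
qed

lemma bounded_linear_matrix_vector_mult_left: "bounded_linear (\<lambda>A::real^'n^'m. A *v x)"
proof (rule bounded_linear_intro[of _ "norm x"])
  fix A B :: "real^'n^'m" and r :: real
  show "(A + B) *v x = A *v x + B *v x" by (rule matrix_vector_mult_add_rdistrib)
  show "(r *\<^sub>R A) *v x = r *\<^sub>R (A *v x)"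
    by (simp add: vec_eq_iff matrix_vector_mult_def sum_distrib_left mult.assoc)
  show "norm (A *v x) \<le> norm A * norm x" by (rule norm_matrix_vector_mult_le)
qed

lemma eigenvalues_eq_op_eigenvalues: "eigenvalues M = op_eigenvalues ((*v) M)"
  unfolding eigenvalues_def op_eigenvalues_def scalar_mult_eq_scaleR ..

lemma pr_pos_eq: "pr_pos M = orth_proj (span (pos_eigenvectors ((*v) M)))"
  unfolding pr_pos_def pos_eigenvectors_def scalar_mult_eq_scaleR ..

lemma pr_neg_eq: "pr_neg M = orth_proj (span (neg_eigenvectors ((*v) M)))"
  unfolding pr_neg_def neg_eigenvectors_def scalar_mult_eq_scaleR ..

lemma self_adjoint_matrix_iff:
  "self_adjoint ((*v) (M::real^'n^'n)) \<longleftrightarrow> (\<forall>x y. (M *v x) \<bullet> y = x \<bullet> (M *v y))"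
  by (simp add: self_adjoint_def)

lemma self_adjoint_add_mat:
  "self_adjoint ((*v) M) \<Longrightarrow> self_adjoint ((*v) ((M::real^'n^'n) + mat c))"
  unfolding self_adjoint_matrix_iff matrix_vector_mult_add_mat
  by (simp add: inner_add_left inner_add_right)

lemma eigenvalues_add_mat: "eigenvalues ((M::real^'n^'n) + mat c) = (\<lambda>l. l + c) ` eigenvalues M"
proof -
  have "M *v v + c *\<^sub>R v = l *\<^sub>R v \<longleftrightarrow> M *v v = (l - c) *\<^sub>R v" for v :: "real^'n" and l
    by (auto simp: algebra_simps)
  hence "eigenvalues (M + mat c) = {l. l - c \<in> eigenvalues M}"
    unfolding eigenvalues_def scalar_mult_eq_scaleR matrix_vector_mult_add_mat by auto
  also have "\<dots> = (\<lambda>l. l + c) ` eigenvalues M"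
    by (auto intro: image_eqI[where x = "_ - c"])
  finally show ?thesis .
qed

lemma self_adjoint_eigenvalues:
  fixes M :: "real^'n^'n"
  assumes M: "self_adjoint ((*v) M)"
  shows "finite (eigenvalues M)" and "eigenvalues M \<noteq> {}" and "card (eigenvalues M) \<le> CARD('n)"
proof -
  show "finite (eigenvalues M)" "card (eigenvalues M) \<le> CARD('n)"
    using self_adjoint_op_eigenvalues_finite[OF M] by (simp_all add: eigenvalues_eq_op_eigenvalues)
  obtain i :: 'n where True by blast
  have "axis i (1::real) \<noteq> 0" by simp
  then obtain x0 :: "real^'n" where x0: "norm x0 = 1" "M *v x0 = (x0 \<bullet> (M *v x0)) *\<^sub>R x0"
    using self_adjoint_invariant_subspace_eigenvector[OF M subspace_UNIV] by blast
  have "x0 \<noteq> 0" using x0(1) by auto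
  with x0(2) have "x0 \<bullet> (M *v x0) \<in> eigenvalues M"
    by (auto simp: eigenvalues_def scalar_mult_eq_scaleR)
  thus "eigenvalues M \<noteq> {}" by blast
qed

lemma minsp_ge_iff:
  "self_adjoint ((*v) M) \<Longrightarrow> c \<le> minsp M \<longleftrightarrow> (\<forall>l\<in>eigenvalues M. c \<le> \<bar>l\<bar>)"
  using self_adjoint_eigenvalues[of M] by (simp add: minsp_def Min_ge_iff)

lemma sp_le_iff:
  "self_adjoint ((*v) M) \<Longrightarrow> sp M \<le> c \<longleftrightarrow> (\<forall>l\<in>eigenvalues M. \<bar>l\<bar> \<le> c)"
  using self_adjoint_eigenvalues[of M] by (simp add: sp_def Max_le_iff)

lemma abs_eigenvalue_le_norm:
  assumes "l \<in> eigenvalues (M::real^'n^'n)"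
  shows "\<bar>l\<bar> \<le> norm M"
proof -
  obtain v where v: "v \<noteq> 0" "M *v v = l *\<^sub>R v"
    using assms by (auto simp: eigenvalues_def scalar_mult_eq_scaleR)
  have "\<bar>l\<bar> * norm v \<le> norm M * norm v"
    using norm_matrix_vector_mult_le[of M v] v(2) by simp
  thus ?thesis using v(1) by simp
qed

lemma matrix_inv_mult_vector:
  fixes M :: "real^'n^'n"
  assumes "\<And>x. M *v x = 0 \<Longrightarrow> x = 0"
  shows "M *v (matrix_inv M *v y) = y"
proof -
  have "invertible M"
    unfolding invertible_left_inverse matrix_left_invertible_ker using assms by blast
  then obtain M' where "M ** M' = mat 1 \<and> M' ** M = mat 1" unfolding invertible_def by blast
  hence "M ** matrix_inv M = mat 1" unfolding matrix_inv_def by (rule someI2) auto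
  thus ?thesis by (simp add: matrix_vector_mul_assoc)
qed

lemma orth_proj_unique:
  assumes S: "subspace S" and p: "p \<in> S" "\<And>s. s \<in> S \<Longrightarrow> (v - p) \<bullet> s = 0"
  shows "orth_proj S v = p"
  unfolding orth_proj_def
proof (rule the_equality)
  show "p \<in> S \<and> (\<forall>s\<in>S. (v - p) \<bullet> s = 0)" using p by auto
next
  fix q assume q: "q \<in> S \<and> (\<forall>s\<in>S. (v - q) \<bullet> s = 0)"
  have pq: "p - q \<in> S" using p q S by (simp add: subspace_diff)
  have "(p - q) \<bullet> (p - q) = (v - q) \<bullet> (p - q) - (v - p) \<bullet> (p - q)"
    by (simp add: inner_diff_left)
  also have "\<dots> = 0" using q p(2)[OF pq] pq by auto
  finally show "q = p" by simp
qed

lemma self_adjoint_matrix_reflected_direction: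
  fixes M :: "real^'n^'n" and y :: "real^'n"
  assumes M: "self_adjoint ((*v) M)" and mu: "mu > 0" "\<And>l. l \<in> eigenvalues M \<Longrightarrow> mu \<le> \<bar>l\<bar>"
  defines "w \<equiv> pr_pos M (matrix_inv M *v y) - pr_neg M (matrix_inv M *v y)"
  shows "mu * (w \<bullet> w) \<le> w \<bullet> y" and "mu * norm w \<le> norm y"
proof -
  define F where "F = (*v) M"
  define v where "v = matrix_inv M *v y"
  have F: "self_adjoint F" and muF: "\<And>l. l \<in> op_eigenvalues F \<Longrightarrow> mu \<le> \<bar>l\<bar>"
    using M mu(2) by (simp_all add: F_def eigenvalues_eq_op_eigenvalues)
  have ker: "x = 0" if "M *v x = 0" for x
  proof (rule ccontr)
    assume "x \<noteq> 0"
    hence "0 \<in> eigenvalues M" using that by (auto simp: eigenvalues_def scalar_mult_eq_scaleR)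
    thus False using mu by fastforce
  qed
  obtain a b where a: "a \<in> span (pos_eigenvectors F)" and b: "b \<in> span (neg_eigenvectors F)"
    and v: "v = a + b"
    using self_adjoint_span_pos_neg_eigenvectors[OF F, of v] ker by (auto simp: F_def)
  have "pr_pos M v = a"
    unfolding pr_pos_eq F_def[symmetric] using v
    by (intro orth_proj_unique[OF subspace_span a])
      (simp add: self_adjoint_pos_neg_eigenvectors_orthogonal[OF F _ b] inner_commute)
  moreover have "pr_neg M v = b"
    unfolding pr_neg_eq F_def[symmetric] using v
    by (intro orth_proj_unique[OF subspace_span b])
      (simp add: self_adjoint_pos_neg_eigenvectors_orthogonal[OF F a])
  ultimately have w: "w = a - b" unfolding w_def v_def by simp
  have "F v = y" unfolding F_def v_def by (rule matrix_inv_mult_vector[OF ker])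
  thus wy: "mu * (w \<bullet> w) \<le> w \<bullet> y"
    using self_adjoint_reflected_direction[OF F muF a b] by (simp add: w v)
  have "mu * (norm w)\<^sup>2 \<le> norm w * norm y"
    using wy norm_cauchy_schwarz[of w y] by (simp add: power2_norm_eq_inner)
  thus "mu * norm w \<le> norm y"
    by (cases "w = 0") (auto simp: power2_eq_square mult.assoc[symmetric] mult_le_cancel_right)
qed

lemma kappa_pos:
  assumes "inj_on d {0..m}" and "1 \<le> m"
  shows "0 < kappa m d"
proof -
  define K where "K = {\<bar>d i - d j\<bar> | i j. i \<le> m \<and> j \<le> m \<and> i \<noteq> j}"
  have "K \<subseteq> (\<lambda>(i, j). \<bar>d i - d j\<bar>) ` ({..m} \<times> {..m})" unfolding K_def by auto
  hence "finite K" by (rule finite_subset) auto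
  moreover have "\<bar>d 0 - d 1\<bar> \<in> K" using assms(2) unfolding K_def by force
  moreover have "k > 0" if "k \<in> K" for k
    using that assms(1) unfolding K_def inj_on_def by auto
  ultimately have "0 < Min K" by (metis Min_in empty_iff)
  thus ?thesis unfolding kappa_def K_def[symmetric] by simp
qed

lemma two_kappa_le:
  assumes "i \<le> m" "j \<le> m" "i \<noteq> j"
  shows "2 * kappa m d \<le> \<bar>d i - d j\<bar>"
proof -
  define K where "K = {\<bar>d i - d j\<bar> | i j. i \<le> m \<and> j \<le> m \<and> i \<noteq> j}"
  have "K \<subseteq> (\<lambda>(i, j). \<bar>d i - d j\<bar>) ` ({..m} \<times> {..m})" unfolding K_def by auto
  hence "finite K" by (rule finite_subset) auto
  moreover have "\<bar>d i - d j\<bar> \<in> K" using assms unfolding K_def by blast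
  ultimately show ?thesis unfolding kappa_def K_def[symmetric] by simp
qed

text \<open>Pigeonhole: an eigenvalue of \<open>M\<close> can be closer than \<open>\<kappa> t\<close> to \<open>-d j t\<close> for at most one
  \<open>j\<close>, because these points are \<open>2 \<kappa> t\<close> apart; there are \<open>m + 1\<close> indices but at most \<open>m\<close>
  eigenvalues.\<close>

lemma exists_shift_minsp_ge:
  fixes M :: "real^'n^'n"
  assumes M: "self_adjoint ((*v) M)" and t: "t > 0" and inj: "inj_on d {0..CARD('n)}"
  shows "\<exists>j\<le>CARD('n). kappa CARD('n) d * t \<le> minsp (M + mat (d j * t))"
proof (rule ccontr)
  define m where "m = CARD('n)"
  assume "\<not> ?thesis"
  hence "\<exists>l\<in>eigenvalues M. \<bar>l + d j * t\<bar> < kappa m d * t" if "j \<le> m" for j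
    using that unfolding m_def minsp_ge_iff[OF self_adjoint_add_mat[OF M]] eigenvalues_add_mat
    by (fastforce simp: not_le)
  then obtain ev where ev: "\<And>j. j \<le> m \<Longrightarrow> ev j \<in> eigenvalues M \<and> \<bar>ev j + d j * t\<bar> < kappa m d * t"
    by metis
  have "inj_on ev {0..m}"
  proof (rule inj_onI, rule ccontr)
    fix i j assume ij: "i \<in> {0..m}" "j \<in> {0..m}" "ev i = ev j" "i \<noteq> j"
    have "(ev i + d i * t) - (ev j + d j * t) = (d i - d j) * t"
      using ij(3) by (simp add: algebra_simps)
    hence "\<bar>d i - d j\<bar> * t = \<bar>(ev i + d i * t) - (ev j + d j * t)\<bar>" using t by (simp add: abs_mult)
    also have "\<dots> \<le> \<bar>ev i + d i * t\<bar> + \<bar>ev j + d j * t\<bar>" by (rule abs_triangle_ineq4)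
    also have "\<dots> < 2 * kappa m d * t" using ev[of i] ev[of j] ij by auto
    finally have "\<bar>d i - d j\<bar> < 2 * kappa m d" using t by simp
    thus False using two_kappa_le[of i m j d] ij by auto
  qed
  hence "card {0..m} \<le> card (eigenvalues M)"
    using ev self_adjoint_eigenvalues(1)[OF M] by (intro card_inj_on_le) auto
  thus False using self_adjoint_eigenvalues(3)[OF M] by (simp add: m_def)
qed

section \<open>Symmetry of the Hessian and the Armijo step\<close>

lemma has_real_derivative_along_line:
  fixes f :: "'a::real_inner \<Rightarrow> real"
  assumes grad: "\<And>x. (f has_derivative (\<lambda>h. g x \<bullet> h)) (at x)"
  shows "((\<lambda>s. f (p + s *\<^sub>R u)) has_real_derivative (g (p + s *\<^sub>R u) \<bullet> u)) (at s)"
proof -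
  have "((\<lambda>s. p + s *\<^sub>R u) has_derivative (\<lambda>h. h *\<^sub>R u)) (at s)"
    by (auto intro!: derivative_eq_intros)
  from diff_chain_at[OF this grad]
  have "((\<lambda>s. f (p + s *\<^sub>R u)) has_derivative (\<lambda>h. g (p + s *\<^sub>R u) \<bullet> (h *\<^sub>R u))) (at s)"
    by (simp add: o_def)
  thus ?thesis unfolding has_field_derivative_def
    by (rule has_derivative_eq_rhs) (simp add: fun_eq_iff mult.commute)
qed

lemma has_real_derivative_inner_along_line:
  fixes g :: "'a::real_inner \<Rightarrow> 'a"
  assumes hess: "\<And>x. (g has_derivative g' x) (at x)"
  shows "((\<lambda>s. g (p + s *\<^sub>R u) \<bullet> w) has_real_derivative (g' (p + s *\<^sub>R u) u \<bullet> w)) (at s)"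
proof -
  have lin: "linear (g' (p + s *\<^sub>R u))" by (rule has_derivative_linear[OF hess])
  have "((\<lambda>s. p + s *\<^sub>R u) has_derivative (\<lambda>h. h *\<^sub>R u)) (at s)"
    by (auto intro!: derivative_eq_intros)
  from diff_chain_at[OF this hess]
  have "((\<lambda>s. g (p + s *\<^sub>R u)) has_derivative (\<lambda>h. g' (p + s *\<^sub>R u) (h *\<^sub>R u))) (at s)"
    by (simp add: o_def)
  hence "((\<lambda>s. g (p + s *\<^sub>R u) \<bullet> w) has_derivative (\<lambda>h. g' (p + s *\<^sub>R u) (h *\<^sub>R u) \<bullet> w)) (at s)"
    by (auto intro!: derivative_eq_intros)
  thus ?thesis unfolding has_field_derivative_def
    by (rule has_derivative_eq_rhs) (simp add: fun_eq_iff linear_scale[OF lin] mult.commute)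
qed

lemma second_difference_mean_value:
  fixes f :: "'a::real_inner \<Rightarrow> real"
  assumes grad: "\<And>x. (f has_derivative (\<lambda>h. g x \<bullet> h)) (at x)"
    and hess: "\<And>x. (g has_derivative g' x) (at x)"
    and s: "s > 0"
  obtains r q where "0 < r" "r < s" "0 < q" "q < s"
    "f (x + s *\<^sub>R b + s *\<^sub>R a) - f (x + s *\<^sub>R a) - f (x + s *\<^sub>R b) + f x
       = s * (s * (g' (x + r *\<^sub>R a + q *\<^sub>R b) b \<bullet> a))"
proof -
  define \<phi> where "\<phi> r = f ((x + s *\<^sub>R b) + r *\<^sub>R a) - f (x + r *\<^sub>R a)" for r
  have "(\<phi> has_real_derivative (g ((x + s *\<^sub>R b) + r *\<^sub>R a) \<bullet> a - g (x + r *\<^sub>R a) \<bullet> a)) (at r)"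
    for r unfolding \<phi>_def by (intro derivative_intros has_real_derivative_along_line[OF grad])
  from MVT2[OF s this] obtain r where r: "0 < r" "r < s"
    "\<phi> s - \<phi> 0 = s * (g ((x + s *\<^sub>R b) + r *\<^sub>R a) \<bullet> a - g (x + r *\<^sub>R a) \<bullet> a)"
    by auto
  define \<psi> where "\<psi> q = g ((x + r *\<^sub>R a) + q *\<^sub>R b) \<bullet> a" for q
  have "(\<psi> has_real_derivative (g' ((x + r *\<^sub>R a) + q *\<^sub>R b) b \<bullet> a)) (at q)" for q
    unfolding \<psi>_def by (rule has_real_derivative_inner_along_line[OF hess])
  from MVT2[OF s this]
  obtain q where q: "0 < q" "q < s" "\<psi> s - \<psi> 0 = s * (g' ((x + r *\<^sub>R a) + q *\<^sub>R b) b \<bullet> a)"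
    by auto
  have swap: "(x + s *\<^sub>R b) + r *\<^sub>R a = (x + r *\<^sub>R a) + s *\<^sub>R b" by (simp add: algebra_simps)
  have "f (x + s *\<^sub>R b + s *\<^sub>R a) - f (x + s *\<^sub>R a) - f (x + s *\<^sub>R b) + f x = s * (\<psi> s - \<psi> 0)"
    using r(3) unfolding \<phi>_def \<psi>_def swap by simp
  thus ?thesis using that r(1,2) q by simp
qed

lemma isCont_eq_if_agree_nearby:
  fixes k l :: "'a::metric_space \<Rightarrow> real"
  assumes k: "isCont k x" and l: "isCont l x" and C: "C \<ge> 0"
    and near: "\<And>s. s > 0 \<Longrightarrow> \<exists>p1 p2. dist p1 x \<le> s * C \<and> dist p2 x \<le> s * C \<and> k p1 = l p2"
  shows "k x = l x"
proof (rule ccontr)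
  assume "k x \<noteq> l x"
  define e where "e = \<bar>k x - l x\<bar> / 2"
  have e: "e > 0" using \<open>k x \<noteq> l x\<close> by (simp add: e_def)
  obtain d1 where d1: "d1 > 0" "\<And>p. dist p x < d1 \<Longrightarrow> dist (k p) (k x) < e"
    using k e unfolding continuous_at_eps_delta by blast
  obtain d2 where d2: "d2 > 0" "\<And>p. dist p x < d2 \<Longrightarrow> dist (l p) (l x) < e"
    using l e unfolding continuous_at_eps_delta by blast
  define s where "s = min d1 d2 / (2 * (C + 1))"
  have s: "s > 0" using d1 d2 C by (simp add: s_def)
  have "s * C \<le> s * (C + 1)" using s by simp
  also have "\<dots> = min d1 d2 / 2" using C unfolding s_def by (simp add: field_simps)
  also have "\<dots> < min d1 d2" using d1(1) d2(1) by (simp add: min_def)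
  finally have sC: "s * C < d1" "s * C < d2" by simp_all
  obtain p1 p2 where p: "dist p1 x \<le> s * C" "dist p2 x \<le> s * C" "k p1 = l p2"
    using near[OF s] by blast
  have "dist (k p1) (k x) < e" by (rule d1(2)) (use p(1) sC in linarith)
  moreover have "dist (l p2) (l x) < e" by (rule d2(2)) (use p(2) sC in linarith)
  ultimately have "\<bar>k x - l x\<bar> < 2 * e" using p(3) by (simp add: dist_real_def)
  thus False unfolding e_def by simp
qed

text \<open>Schwarz's theorem: both mixed second differences of \<open>f\<close> are the same number, and
  dividing by \<open>s\<^sup>2\<close> they approach the two mixed partials at \<open>x\<close>.\<close>

lemma second_derivative_symmetric:
  fixes f :: "'a::real_inner \<Rightarrow> real"
  assumes grad: "\<And>x. (f has_derivative (\<lambda>h. g x \<bullet> h)) (at x)"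
    and hess: "\<And>x. (g has_derivative g' x) (at x)"
    and cont: "\<And>u v. isCont (\<lambda>p. g' p u \<bullet> v) x"
  shows "g' x u \<bullet> v = u \<bullet> g' x v"
proof -
  define C where "C = norm u + norm v"
  have close: "dist (x + a *\<^sub>R w1 + b *\<^sub>R w2) x \<le> s * C"
    if "0 < a" "a < s" "0 < b" "b < s" "C = norm w1 + norm w2" for a b s w1 w2
  proof -
    have "dist (x + a *\<^sub>R w1 + b *\<^sub>R w2) x \<le> a * norm w1 + b * norm w2"
      using norm_triangle_ineq[of "a *\<^sub>R w1" "b *\<^sub>R w2"] that by (simp add: dist_norm)
    also have "\<dots> \<le> s * norm w1 + s * norm w2"
      using that by (intro add_mono mult_right_mono) auto
    finally show ?thesis using that(5) by (simp add: algebra_simps)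
  qed
  have "g' x v \<bullet> u = g' x u \<bullet> v"
  proof (rule isCont_eq_if_agree_nearby[OF cont cont])
    fix s :: real assume s: "s > 0"
    obtain r q where rq: "0 < r" "r < s" "0 < q" "q < s"
      "f (x + s *\<^sub>R v + s *\<^sub>R u) - f (x + s *\<^sub>R u) - f (x + s *\<^sub>R v) + f x
         = s * (s * (g' (x + r *\<^sub>R u + q *\<^sub>R v) v \<bullet> u))"
      using second_difference_mean_value[OF grad hess s] by blast
    obtain r' q' where rq': "0 < r'" "r' < s" "0 < q'" "q' < s"
      "f (x + s *\<^sub>R u + s *\<^sub>R v) - f (x + s *\<^sub>R v) - f (x + s *\<^sub>R u) + f x
         = s * (s * (g' (x + r' *\<^sub>R v + q' *\<^sub>R u) u \<bullet> v))"
      using second_difference_mean_value[OF grad hess s] by blast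
    have swap: "x + s *\<^sub>R v + s *\<^sub>R u = x + s *\<^sub>R u + s *\<^sub>R v" by (simp add: algebra_simps)
    have "s * (s * (g' (x + r *\<^sub>R u + q *\<^sub>R v) v \<bullet> u))
         = s * (s * (g' (x + r' *\<^sub>R v + q' *\<^sub>R u) u \<bullet> v))"
      using rq(5) rq'(5) unfolding swap by linarith
    hence "g' (x + r *\<^sub>R u + q *\<^sub>R v) v \<bullet> u = g' (x + r' *\<^sub>R v + q' *\<^sub>R u) u \<bullet> v"
      using s by simp
    moreover have "dist (x + r *\<^sub>R u + q *\<^sub>R v) x \<le> s * C"
      by (rule close[OF rq(1-4)]) (simp add: C_def)
    moreover have "dist (x + r' *\<^sub>R v + q' *\<^sub>R u) x \<le> s * C"
      by (rule close[OF rq'(1-4)]) (simp add: C_def)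
    ultimately show "\<exists>p1 p2. dist p1 x \<le> s * C \<and> dist p2 x \<le> s * C
                        \<and> g' p1 v \<bullet> u = g' p2 u \<bullet> v" by blast
  qed (simp add: C_def)
  thus ?thesis by (simp add: inner_commute)
qed

lemma matrix_gradient_lipschitz_on_convex:
  fixes g :: "real^'n \<Rightarrow> real^'n"
  assumes hess: "\<And>x. (g has_derivative (\<lambda>h. H x *v h)) (at x)"
    and K: "convex K" and bound: "\<And>y. y \<in> K \<Longrightarrow> norm (H y) \<le> L"
    and pq: "p \<in> K" "q \<in> K"
  shows "norm (g p - g q) \<le> L * norm (p - q)"
proof (rule differentiable_bound[OF K _ _ pq])
  fix y assume "y \<in> K"
  show "(g has_derivative (\<lambda>h. H y *v h)) (at y within K)"
    by (rule has_derivative_subset[OF hess]) simp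
  show "onorm (\<lambda>h. H y *v h) \<le> L"
    using norm_matrix_vector_mult_le[of "H y"] bound[OF \<open>y \<in> K\<close>]
    by (intro onorm_le) (meson mult_right_mono norm_ge_zero order_trans)
qed

lemma armijo_descent_step:
  fixes f :: "'a::real_inner \<Rightarrow> real"
  assumes grad: "\<And>x. (f has_derivative (\<lambda>h. g x \<bullet> h)) (at x)"
    and lip: "\<And>\<xi>. 0 \<le> \<xi> \<Longrightarrow> \<xi> \<le> gm \<Longrightarrow> norm (g (x - \<xi> *\<^sub>R w) - g x) \<le> L * \<xi> * norm w"
    and L: "L \<ge> 0" and descent: "mu * (w \<bullet> w) \<le> w \<bullet> g x"
    and gm: "gm > 0" "L * gm \<le> 2 / 3 * mu"
  shows "f (x - gm *\<^sub>R w) - f x \<le> - gm * (w \<bullet> g x) / 3"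
proof -
  from MVT2[OF gm(1) has_real_derivative_along_line[OF grad, of x "- w"]]
  obtain \<xi> where xi: "0 < \<xi>" "\<xi> < gm"
    "f (x - gm *\<^sub>R w) - f x = - gm * (g (x - \<xi> *\<^sub>R w) \<bullet> w)"
    by auto
  have "g x \<bullet> w - L * \<xi> * norm w * norm w \<le> g (x - \<xi> *\<^sub>R w) \<bullet> w"
    using Cauchy_Schwarz_ineq2[of "g (x - \<xi> *\<^sub>R w) - g x" w] lip[of \<xi>] xi
      mult_right_mono[of _ _ "norm w"] by (fastforce simp: inner_diff_left)
  moreover have "L * \<xi> * norm w * norm w \<le> 2 / 3 * (mu * (w \<bullet> w))"
  proof -
    have "L * \<xi> \<le> 2 / 3 * mu" using L xi gm(2) by (meson less_imp_le mult_left_mono order_trans)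
    hence "L * \<xi> * (norm w * norm w) \<le> 2 / 3 * mu * (norm w * norm w)"
      by (rule mult_right_mono) simp
    thus ?thesis by (simp add: mult.assoc dot_square_norm power2_eq_square)
  qed
  moreover have "mu * (w \<bullet> w) \<le> g x \<bullet> w" using descent by (simp add: inner_commute)
  ultimately have "(w \<bullet> g x) / 3 \<le> g (x - \<xi> *\<^sub>R w) \<bullet> w" by (simp add: inner_commute)
  thus ?thesis using xi(3) gm(1) by (simp add: mult_left_mono)
qed

section \<open>The regularized Newton direction\<close>

lemma gamma_step_ge:
  assumes "armijo f H g d tau gamma0 x k" and "gamma0 > 0"
  shows "gamma0 / 3 ^ k \<le> gamma_step f H g d tau gamma0 x"
proof -
  have "(LEAST k. armijo f H g d tau gamma0 x k) \<le> k" by (rule Least_le) (rule assms(1))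
  thus ?thesis unfolding gamma_step_def using assms(2)
    by (intro divide_left_mono power_increasing) auto
qed

lemma compact_continuous_norm_bound:
  assumes "compact K" and "continuous_on K h"
  obtains M where "M > 0" and "\<And>x. x \<in> K \<Longrightarrow> norm (h x) \<le> M"
  using compact_imp_bounded[OF compact_continuous_image[OF assms(2,1)]]
  unfolding bounded_pos by auto

locale regularized_newton =
  fixes f :: "real^'n \<Rightarrow> real" and g :: "real^'n \<Rightarrow> real^'n" and H :: "real^'n \<Rightarrow> real^'n^'n"
    and d :: "nat \<Rightarrow> real" and tau :: real
  assumes grad: "\<And>x. (f has_derivative (\<lambda>h. g x \<bullet> h)) (at x)"
    and hess: "\<And>x. (g has_derivative (\<lambda>h. H x *v h)) (at x)"
    and hess_cont: "continuous_on UNIV H"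
    and d_distinct: "inj_on d {0..CARD('n)}"
    and tau_pos: "tau > 0"
begin

lemma hessian_self_adjoint: "self_adjoint ((*v) (H x))"
proof -
  have "isCont (\<lambda>p. (H p *v u) \<bullet> v) x" for u v
    using hess_cont
    by (intro continuous_intros bounded_linear.isCont[OF bounded_linear_matrix_vector_mult_left])
      (auto simp: continuous_on_eq_continuous_at)
  thus ?thesis
    unfolding self_adjoint_matrix_iff using second_derivative_symmetric[OF grad hess] by blast
qed

lemma Amat_self_adjoint: "self_adjoint ((*v) (Amat H g d tau x))"
  unfolding Amat_def by (rule self_adjoint_add_mat[OF hessian_self_adjoint])

lemma delta_idx_spec:
  assumes "g x \<noteq> 0"
  shows "delta_idx H g d tau x \<le> CARD('n)"
    and "kappa CARD('n) d * norm (g x) powr tau \<le> minsp (Amat H g d tau x)"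
proof -
  have "norm (g x) powr tau > 0" using assms by simp
  from exists_shift_minsp_ge[OF hessian_self_adjoint this d_distinct]
  have "delta_idx H g d tau x \<le> CARD('n)
        \<and> kappa CARD('n) d * norm (g x) powr tau \<le> minsp (Amat H g d tau x)"
    unfolding delta_idx_def Amat_def by (rule LeastI_ex)
  thus "delta_idx H g d tau x \<le> CARD('n)"
    and "kappa CARD('n) d * norm (g x) powr tau \<le> minsp (Amat H g d tau x)" by simp_all
qed

lemma sp_Amat_le:
  assumes "g x \<noteq> 0"
  shows "sp (Amat H g d tau x) \<le> norm (H x) + (\<Sum>i\<le>CARD('n). \<bar>d i\<bar>) * norm (g x) powr tau"
proof -
  define j where "j = delta_idx H g d tau x"
  define t where "t = norm (g x) powr tau"
  have "\<bar>d j\<bar> \<le> (\<Sum>i\<le>CARD('n). \<bar>d i\<bar>)"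
    using delta_idx_spec(1)[OF assms] unfolding j_def by (intro member_le_sum) auto
  hence shift: "\<bar>d j * t\<bar> \<le> (\<Sum>i\<le>CARD('n). \<bar>d i\<bar>) * t"
    unfolding t_def by (simp add: abs_mult mult_right_mono)
  have "\<bar>l\<bar> \<le> norm (H x) + (\<Sum>i\<le>CARD('n). \<bar>d i\<bar>) * t"
    if l: "l \<in> eigenvalues (Amat H g d tau x)" for l
  proof -
    obtain l0 where l0: "l0 \<in> eigenvalues (H x)" "l = l0 + d j * t"
      using l unfolding Amat_def j_def t_def eigenvalues_add_mat by blast
    have "\<bar>l\<bar> \<le> \<bar>l0\<bar> + \<bar>d j * t\<bar>" unfolding l0(2) by (rule abs_triangle_ineq)
    thus ?thesis using abs_eigenvalue_le_norm[OF l0(1)] shift by linarith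
  qed
  thus ?thesis unfolding sp_le_iff[OF Amat_self_adjoint] t_def by blast
qed

lemma Amat_spectrum_bounds:
  assumes B: "compact B" and c: "c > 0" "\<forall>x\<in>B. c \<le> norm (g x)"
  shows "\<exists>T>0. \<forall>x\<in>B. sp (Amat H g d tau x) \<le> T \<and> minsp (Amat H g d tau x) \<ge> 1 / T"
proof -
  have "continuous_on B g"
    using has_derivative_continuous_on[OF hess] continuous_on_subset by blast
  then obtain G where G: "\<And>x. x \<in> B \<Longrightarrow> norm (g x) \<le> G"
    using compact_continuous_norm_bound[OF B] by blast
  obtain MH where MH: "\<And>x. x \<in> B \<Longrightarrow> norm (H x) \<le> MH"
    using compact_continuous_norm_bound[OF B continuous_on_subset[OF hess_cont]] by blast
  define D where "D = (\<Sum>i\<le>CARD('n). \<bar>d i\<bar>)"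
  define mu where "mu = kappa CARD('n) d * c powr tau"
  have kappa: "kappa CARD('n) d > 0" using kappa_pos[OF d_distinct] by simp
  hence mu: "mu > 0" using c(1) by (simp add: mu_def)
  define T where "T = max (MH + D * G powr tau) (1 / mu)"
  have "T > 0" using mu by (simp add: T_def less_max_iff_disj)
  moreover have "sp (Amat H g d tau x) \<le> T \<and> minsp (Amat H g d tau x) \<ge> 1 / T" if x: "x \<in> B" for x
  proof
    have g0: "g x \<noteq> 0" using c x by auto
    have pow: "c powr tau \<le> norm (g x) powr tau" "norm (g x) powr tau \<le> G powr tau"
      using c x G[OF x] tau_pos by (auto intro: powr_mono2)
    have "sp (Amat H g d tau x) \<le> norm (H x) + D * norm (g x) powr tau"
      unfolding D_def by (rule sp_Amat_le[OF g0])
    also have "\<dots> \<le> MH + D * G powr tau"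
      using MH[OF x] pow(2) by (intro add_mono mult_left_mono) (auto simp: D_def)
    also have "\<dots> \<le> T" by (simp add: T_def)
    finally show "sp (Amat H g d tau x) \<le> T" .
    have "1 / mu \<le> T" by (simp add: T_def)
    hence "1 / T \<le> mu" using mu le_imp_inverse_le[of "1 / mu" T] by (simp add: inverse_eq_divide)
    also have "\<dots> \<le> kappa CARD('n) d * norm (g x) powr tau"
      unfolding mu_def using kappa pow(1) by simp
    also have "\<dots> \<le> minsp (Amat H g d tau x)" by (rule delta_idx_spec(2)[OF g0])
    finally show "minsp (Amat H g d tau x) \<ge> 1 / T" .
  qed
  ultimately show ?thesis by blast
qed

lemma wdir_descent:
  assumes "mu > 0" and "\<And>l. l \<in> eigenvalues (Amat H g d tau x) \<Longrightarrow> mu \<le> \<bar>l\<bar>"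
  shows "mu * (wdir H g d tau x \<bullet> wdir H g d tau x) \<le> wdir H g d tau x \<bullet> g x"
    and "mu * norm (wdir H g d tau x) \<le> norm (g x)"
  using self_adjoint_matrix_reflected_direction[OF Amat_self_adjoint assms]
  unfolding wdir_def vdir_def by simp_all

lemma armijo_at_point:
  assumes mu: "mu > 0" "\<And>l. l \<in> eigenvalues (Amat H g d tau x) \<Longrightarrow> mu \<le> \<bar>l\<bar>"
    and K: "convex K" "\<And>y. y \<in> K \<Longrightarrow> norm (H y) \<le> L" and L: "L \<ge> 0"
    and seg: "\<And>\<xi>. 0 \<le> \<xi> \<Longrightarrow> \<xi> \<le> gamma0 / 3 ^ k \<Longrightarrow> x - \<xi> *\<^sub>R wdir H g d tau x \<in> K"
    and step: "gamma0 > 0" "L * (gamma0 / 3 ^ k) \<le> 2 / 3 * mu"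
  shows "armijo f H g d tau gamma0 x k"
proof -
  define w where "w = wdir H g d tau x"
  have "x \<in> K" using seg[of 0] step(1) by simp
  have "norm (g (x - \<xi> *\<^sub>R w) - g x) \<le> L * \<xi> * norm w"
    if "0 \<le> \<xi>" "\<xi> \<le> gamma0 / 3 ^ k" for \<xi>
    using matrix_gradient_lipschitz_on_convex[OF hess K seg[OF that] \<open>x \<in> K\<close>] that
    unfolding w_def by simp
  moreover have "mu * (w \<bullet> w) \<le> w \<bullet> g x" using wdir_descent(1)[OF mu] unfolding w_def .
  ultimately have "f (x - (gamma0 / 3 ^ k) *\<^sub>R w) - f x \<le> - (gamma0 / 3 ^ k) * (w \<bullet> g x) / 3"
    using armijo_descent_step[OF grad _ L _ _ step(2)] step(1) by simp
  thus ?thesis unfolding armijo_def Let_def w_def by simp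
qed

lemma armijo_uniform_step:
  assumes B: "compact B" and gamma0: "gamma0 > 0" and c: "c > 0" "\<forall>x\<in>B. c \<le> norm (g x)"
  shows "\<exists>k. \<forall>x\<in>B. armijo f H g d tau gamma0 x k"
proof -
  obtain T where T: "T > 0" "\<forall>x\<in>B. minsp (Amat H g d tau x) \<ge> 1 / T"
    using Amat_spectrum_bounds[OF B c] by blast
  define mu where "mu = 1 / T"
  have mu: "mu > 0" using T(1) by (simp add: mu_def)
  have eig: "mu \<le> \<bar>l\<bar>" if "x \<in> B" "l \<in> eigenvalues (Amat H g d tau x)" for x l
    using T(2) that minsp_ge_iff[OF Amat_self_adjoint] unfolding mu_def by blast
  have "continuous_on B g"
    using has_derivative_continuous_on[OF hess] continuous_on_subset by blast
  then obtain G where G: "G > 0" "\<And>x. x \<in> B \<Longrightarrow> norm (g x) \<le> G"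
    using compact_continuous_norm_bound[OF B] by blast
  obtain r where r: "\<And>x. x \<in> B \<Longrightarrow> norm x \<le> r"
    using compact_imp_bounded[OF B] unfolding bounded_iff by blast
  define K where "K = cball (0::real^'n) (r + gamma0 * G / mu)"
  have "compact K" "convex K" by (simp_all add: K_def)
  then obtain L where L: "L > 0" "\<And>y. y \<in> K \<Longrightarrow> norm (H y) \<le> L"
    using compact_continuous_norm_bound continuous_on_subset[OF hess_cont subset_UNIV] by metis
  obtain k where k: "gamma0 * L * 3 / (2 * mu) < 3 ^ k" using real_arch_pow[of 3] by force
  have step: "L * (gamma0 / 3 ^ k) \<le> 2 / 3 * mu" using k mu gamma0 by (simp add: field_simps)
  have "armijo f H g d tau gamma0 x k" if x: "x \<in> B" for x
  proof (rule armijo_at_point[OF mu eig[OF x] \<open>convex K\<close> L(2) less_imp_le[OF L(1)] _ gamma0 step])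
    define w where "w = wdir H g d tau x"
    have "mu * norm w \<le> G"
      using wdir_descent(2)[where x = x, OF mu eig[OF x]] G(2)[OF x] unfolding w_def by simp
    hence "norm w \<le> G / mu" using mu by (simp add: field_simps)
    fix \<xi> assume \<xi>: "0 \<le> \<xi>" "\<xi> \<le> gamma0 / 3 ^ k"
    moreover have "gamma0 / 3 ^ k \<le> gamma0" using gamma0 by (auto simp: divide_le_eq)
    ultimately have "\<xi> * norm w \<le> gamma0 * (G / mu)"
      using \<open>norm w \<le> G / mu\<close> by (intro mult_mono) auto
    thus "x - \<xi> *\<^sub>R w \<in> K"
      using norm_triangle_ineq4[of x "\<xi> *\<^sub>R w"] r[OF x] \<xi> unfolding K_def by simp
  qed
  thus ?thesis by blast
qed

end

theorem lemma2:
  fixes f :: "real^'n \<Rightarrow> real"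
    and g :: "real^'n \<Rightarrow> real^'n"
    and H :: "real^'n \<Rightarrow> real^'n^'n"
    and d :: "nat \<Rightarrow> real"
    and tau gamma0 :: real
    and B :: "(real^'n) set"
  assumes grad: "\<And>x. (f has_derivative (\<lambda>h. g x \<bullet> h)) (at x)"
    and hess: "\<And>x. (g has_derivative (\<lambda>h. H x *v h)) (at x)"
    and hess_cont: "continuous_on UNIV H"
    and d_distinct: "inj_on d {0..CARD('n)}"
    and tau_pos: "tau > 0"
    and gamma0: "0 < gamma0" "gamma0 < 1"
    and B_compact: "compact B"
    and B_grad: "\<exists>c>0. \<forall>x\<in>B. norm (g x) \<ge> c"
  shows "(\<exists>T>0. \<forall>x\<in>B. sp (Amat H g d tau x) \<le> T \<and> minsp (Amat H g d tau x) \<ge> 1 / T)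
       \<and> (\<exists>c>0. \<forall>x\<in>B. (\<exists>k. armijo f H g d tau gamma0 x k) \<and> gamma_step f H g d tau gamma0 x \<ge> c)"
proof -
  interpret regularized_newton f g H d tau
    by unfold_locales (fact grad hess hess_cont d_distinct tau_pos)+
  obtain c where c: "c > 0" "\<forall>x\<in>B. c \<le> norm (g x)" using B_grad by blast
  obtain k where k: "\<forall>x\<in>B. armijo f H g d tau gamma0 x k"
    using armijo_uniform_step[OF B_compact gamma0(1) c] by blast
  have "\<forall>x\<in>B. (\<exists>k. armijo f H g d tau gamma0 x k) \<and> gamma0 / 3 ^ k \<le> gamma_step f H g d tau gamma0 x"
    using k gamma_step_ge[OF _ gamma0(1)] by blast
  moreover have "gamma0 / 3 ^ k > 0" using gamma0(1) by simp
  ultimately show ?thesis using Amat_spectrum_bounds[OF B_compact c] by blast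
qed

end
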